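(* Let $d$ be a positive square-free integer with $d\equiv 7\pmod 8$, $K=\mathbb{Q}[\sqrt{-d}]$ with ring of integers $\mathfrak{o}_K$, and $L=\mathbb{Q}[\sqrt{2d}]$ (where $2d$ is square-free) with ring of integers $\mathfrak{o}_L$. Let $\xi,\psi,\phi$ be pairwise distinct elements of $\{1,i,j,k\}$ and $p,m\in\mathbb{Z}$. Then the following are equivalent: (i) $u:=m\sqrt{-d}\,\xi+p\psi+(1-p)\phi\in\mathcal{U}(\mathbb{H}(\mathfrak{o}_K))$; (ii) $\epsilon:=(2p-1)+m\sqrt{2d}\in\mathcal{U}(\mathfrak{o}_L)$.
   Context: $\mathbb{H}(K)=\left(\frac{-1,-1}{K}\right)$ is the quaternion algebra over $K$ with $K$-basis $1,i,j,k$, $i^2=j^2=-1$, $k=ji=-ij$; $\mathbb{H}(\mathfrak{o}_K)$ is the set of $\mathfrak{o}_K$-linear combinations of $1,i,j,k$. *)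

theory Defs
  imports "HOL-Computational_Algebra.Computational_Algebra"
begin

(* Quaternions a + b i + c j + e k over a commutative ring, with
   i^2 = j^2 = -1 and k = j i = - i j  (the convention of the paper). *)
datatype 'a quat = Quat 'a 'a 'a 'a

fun qre :: "'a quat \<Rightarrow> 'a" where "qre (Quat a b c e) = a"
fun qi :: "'a quat \<Rightarrow> 'a" where "qi (Quat a b c e) = b"
fun qj :: "'a quat \<Rightarrow> 'a" where "qj (Quat a b c e) = c"
fun qk :: "'a quat \<Rightarrow> 'a" where "qk (Quat a b c e) = e"

definition qadd :: "'a::comm_ring_1 quat \<Rightarrow> 'a quat \<Rightarrow> 'a quat" where
  "qadd x y = Quat (qre x + qre y) (qi x + qi y) (qj x + qj y) (qk x + qk y)"

definition qscale :: "'a::comm_ring_1 \<Rightarrow> 'a quat \<Rightarrow> 'a quat" where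
  "qscale s x = Quat (s * qre x) (s * qi x) (s * qj x) (s * qk x)"

definition qmult :: "'a::comm_ring_1 quat \<Rightarrow> 'a quat \<Rightarrow> 'a quat" where
  "qmult x y = Quat
     (qre x * qre y - qi x * qi y - qj x * qj y - qk x * qk y)
     (qre x * qi y + qi x * qre y - qj x * qk y + qk x * qj y)
     (qre x * qj y + qj x * qre y + qi x * qk y - qk x * qi y)
     (qre x * qk y + qk x * qre y - qi x * qj y + qj x * qi y)"

definition qone :: "'a::comm_ring_1 quat" where "qone = Quat 1 0 0 0"

definition qbasis :: "nat \<Rightarrow> 'a::comm_ring_1 quat" where
  "qbasis n = (if n = 0 then Quat 1 0 0 0 else if n = 1 then Quat 0 1 0 0
               else if n = 2 then Quat 0 0 1 0 else Quat 0 0 0 1)"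

definition quat_over :: "'a::comm_ring_1 set \<Rightarrow> 'a quat set" where
  "quat_over R = {x. qre x \<in> R \<and> qi x \<in> R \<and> qj x \<in> R \<and> qk x \<in> R}"

definition quat_units :: "'a::comm_ring_1 set \<Rightarrow> 'a quat set" where
  "quat_units R = {x \<in> quat_over R. \<exists>y \<in> quat_over R. qmult x y = qone \<and> qmult y x = qone}"

definition ring_units :: "'a::comm_ring_1 set \<Rightarrow> 'a set" where
  "ring_units R = {x \<in> R. \<exists>y \<in> R. x * y = 1}"

definition sqrt_neg :: "int \<Rightarrow> complex" where
  "sqrt_neg d = \<i> * complex_of_real (sqrt (real_of_int d))"

definition imag_field :: "int \<Rightarrow> complex set" where
  "imag_field d = {of_rat a + of_rat b * sqrt_neg d | a b. True}"

definition imag_ring_of_integers :: "int \<Rightarrow> complex set" where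
  "imag_ring_of_integers d = {x \<in> imag_field d. algebraic_int x}"

definition real_field :: "int \<Rightarrow> real set" where
  "real_field n = {of_rat a + of_rat b * sqrt (real_of_int n) | a b. True}"

definition real_ring_of_integers :: "int \<Rightarrow> real set" where
  "real_ring_of_integers n = {x \<in> real_field n. algebraic_int x}"

end

theory Submission
  imports Defs
begin

(* The reduced norm of u is N = 2p^2 - 2p + 1 - m^2 d and the norm of eps is
   (2p - 1)^2 - 2d m^2 = 2N - 1; each condition says that the respective norm is +-1.
   If u y = 1 then conj u = N y; since p and 1 - p occur among the coordinates of conj u
   and a rational algebraic integer is an integer, N divides p + (1 - p) = 1. Conversely
   +-conj u inverts u. If eps has an integral inverse (2p - 1 - m sqrt(2d)) / (2N - 1), this
   irrational number is a root of the primitive polynomial (2N - 1) X^2 - 2(2p - 1) X + 1, and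
   Gauss's lemma forces its leading coefficient to be a unit. Finally d = 3 mod 4 gives
   N = 1 or 2 mod 4, which excludes N = 0 and N = -1, so both conditions mean N = 1. *)

lemma map_poly_of_int_add:
  "map_poly (of_int :: int \<Rightarrow> 'a::comm_ring_1) (p + q) = map_poly of_int p + map_poly of_int q"
  by (intro poly_eqI) (simp add: coeff_map_poly)

lemma map_poly_of_int_mult:
  "map_poly (of_int :: int \<Rightarrow> 'a::comm_ring_1) (p * q) = map_poly of_int p * map_poly of_int q"
  by (induction p) (simp_all add: map_poly_pCons map_poly_smult map_poly_of_int_add)

lemma algebraic_int_lead_coeff_unit:
  fixes G :: "int poly" and y :: "'a::field_char_0"
  assumes content: "content G = 1" and root: "poly (map_poly of_int G) y = 0"
    and "algebraic_int y"
    and minimal: "\<And>R. R \<noteq> 0 \<Longrightarrow> degree R < degree G \<Longrightarrow> poly (map_poly of_int R) y \<noteq> 0"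
  shows "is_unit (lead_coeff G)"
proof -
  obtain P where P: "poly (map_poly of_int P) y = 0" "lead_coeff P = 1"
    using \<open>algebraic_int y\<close> algebraic_int_altdef_ipoly by blast
  have "G \<noteq> 0" using content by auto
  define R where "R = pseudo_mod P G"
  obtain a S where aS: "a \<noteq> 0" "smult a P = G * S + R"
    using pseudo_mod(1)[OF \<open>G \<noteq> 0\<close>, of P] unfolding R_def by blast
  have "poly (map_poly of_int R) y = 0"
    using arg_cong[OF aS(2), of "\<lambda>Q. poly (map_poly of_int Q) y"]
    by (simp add: map_poly_of_int_mult map_poly_of_int_add map_poly_smult P root)
  with minimal pseudo_mod(2)[OF \<open>G \<noteq> 0\<close>, of P] have "R = 0"
    unfolding R_def by blast
  with aS P(2) have "S \<noteq> 0" by auto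
  have "content P dvd 1"
    using content_dvd_coeff[of P "degree P"] P(2) by simp
  then have "content P = 1" using is_unit_content_iff by blast
  then have "content S = normalize a"
    using arg_cong[OF aS(2), of content] \<open>R = 0\<close> content by (simp add: content_mult)
  then have "a dvd lead_coeff S"
    by (metis content_dvd_coeff normalize_dvd_iff)
  moreover have "a = lead_coeff G * lead_coeff S"
    using arg_cong[OF aS(2), of lead_coeff] P(2) \<open>R = 0\<close> \<open>a \<noteq> 0\<close> by (simp add: lead_coeff_mult)
  ultimately show ?thesis
    using \<open>S \<noteq> 0\<close> by (metis dvd_mult_cancel_right leading_coeff_0_iff mult_1)
qed

lemma int_poly_root_rational_if_degree_le_one:
  fixes R :: "int poly" and y :: "'a::field_char_0"
  assumes "R \<noteq> 0" "degree R \<le> 1" "poly (map_poly of_int R) y = 0"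
  shows "y \<in> \<rat>"
proof -
  have R: "R = [:coeff R 0, coeff R 1:]"
    using assms(2) by (intro poly_eqI) (auto simp: coeff_pCons coeff_eq_0 split: nat.splits)
  have root: "of_int (coeff R 0) + of_int (coeff R 1) * y = 0"
    using assms(3) by (subst (asm) R) (simp add: map_poly_pCons mult.commute)
  have "coeff R 1 \<noteq> 0"
  proof
    assume "coeff R 1 = 0"
    with root have "coeff R 0 = 0" by simp
    with R \<open>coeff R 1 = 0\<close> assms(1) show False by simp
  qed
  with root have "y = - of_int (coeff R 0) / of_int (coeff R 1)"
    by (simp add: field_simps add_eq_0_iff)
  then show ?thesis by simp
qed

lemma int_dvd_if_eq_mult_algebraic_int:
  fixes w :: "'a::field_char_0"
  assumes "of_int k = of_int N * w" "algebraic_int w"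
  shows "N dvd k"
proof (cases "N = 0")
  case False
  then have "w = of_int k / of_int N"
    using assms(1) by (simp add: field_simps)
  then have "w \<in> \<int>"
    using assms(2) by (intro rational_algebraic_int_is_int) simp_all
  then obtain z where "w = of_int z" by (auto elim: Ints_cases)
  with assms(1) have "of_int k = (of_int (N * z) :: 'a)" by simp
  then show ?thesis by (simp only: of_int_eq_iff dvd_triv_left)
qed (use assms(1) in simp)

lemma quadratic_integer_unit_norm_dvd_one:
  fixes r y :: "'a::field_char_0" and A m n :: int
  assumes r2: "r\<^sup>2 = of_int n" and irr: "r \<notin> \<rat>"
    and inv: "(of_int A + of_int m * r) * y = 1" and "algebraic_int y"
  shows "A\<^sup>2 - n * m\<^sup>2 dvd 1"
proof (cases "m = 0")
  case True
  then have "y = inverse (of_int A)"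
    using inv by (simp add: inverse_unique)
  then have "y \<in> \<int>"
    using \<open>algebraic_int y\<close> by (intro rational_algebraic_int_is_int) auto
  then obtain z where "y = of_int z" by (auto elim: Ints_cases)
  with inv True have "of_int (A * z) = (of_int 1 :: 'a)"
    by simp
  then have "A * z = 1"
    by (simp only: of_int_eq_iff)
  then have "A dvd 1" by (metis dvdI)
  then show ?thesis
    using mult_dvd_mono[of A 1 A 1] True by (simp add: power2_eq_square)
next
  case False
  define M where "M = A\<^sup>2 - n * m\<^sup>2"
  have norm: "(of_int A + of_int m * r) * (of_int A - of_int m * r) = (of_int M :: 'a)"
    using r2 by (simp add: M_def power2_eq_square algebra_simps)
  have rat_if: "r \<in> \<rat>" if "of_int A - of_int m * r = c" "c \<in> \<rat>" for c
  proof -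
    have "r = (of_int A - c) / of_int m" using that False by (simp add: field_simps)
    then show ?thesis using that(2) by simp
  qed
  have "M \<noteq> 0"
  proof
    assume "M = 0"
    with norm have "of_int A - of_int m * r = 0 \<or> of_int A + of_int m * r = (0 :: 'a)"
      by (simp add: disj_commute)
    then show False
      using rat_if[of 0] rat_if[of "2 * of_int A"] irr by (auto simp: algebra_simps)
  qed
  have My: "of_int M * y = of_int A - of_int m * r"
    using inv norm by (metis mult.assoc mult.commute mult_1)
  define G where "G = [:1, -2 * A, M:]"
  have "poly (map_poly of_int G) y = 0"
  proof -
    have "of_int M * poly (map_poly of_int G) y
          = (of_int M * y)\<^sup>2 - 2 * of_int A * (of_int M * y) + of_int M"
      by (simp add: G_def map_poly_pCons power2_eq_square algebra_simps)
    also have "\<dots> = 0"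
      unfolding My using r2 by (simp add: M_def power2_eq_square algebra_simps)
    finally show ?thesis using \<open>M \<noteq> 0\<close> by simp
  qed
  moreover have "content G = 1"
    by (simp add: G_def content_def)
  moreover have "y \<notin> \<rat>"
    using rat_if[of "of_int M * y"] My irr by (metis Rats_mult Rats_of_int)
  ultimately have "is_unit (lead_coeff G)"
    using int_poly_root_rational_if_degree_le_one \<open>algebraic_int y\<close>
    by (intro algebraic_int_lead_coeff_unit) (auto simp: G_def \<open>M \<noteq> 0\<close> less_Suc_eq_le)
  then show ?thesis
    using \<open>M \<noteq> 0\<close> by (simp add: G_def M_def)
qed

lemma sqrt_int_in_Rats_imp_square:
  assumes "n \<ge> 0" "sqrt (real_of_int n) \<in> \<rat>"
  shows "\<exists>k. n = k\<^sup>2"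
proof -
  have "sqrt (real_of_int n) \<in> \<int>"
    using assms by (intro rational_algebraic_int_is_int algebraic_int_sqrt) simp_all
  then obtain k where "sqrt (real_of_int n) = of_int k" by (auto elim: Ints_cases)
  then have "real_of_int n = of_int (k\<^sup>2)"
    using assms(1) by (metis of_int_0_le_iff of_int_power real_sqrt_pow2)
  then show ?thesis by (intro exI[of _ k]) linarith
qed

lemma quadratic_integer_in_real_ring_of_integers:
  assumes "n \<ge> 0"
  shows "of_int A + of_int m * sqrt (real_of_int n) \<in> real_ring_of_integers n"
proof -
  let ?x = "of_int A + of_int m * sqrt (real_of_int n)"
  have "poly (map_poly of_int [:A\<^sup>2 - n * m\<^sup>2, -2 * A, 1:]) ?x = 0"
    using assms by (simp add: map_poly_pCons power2_eq_square algebra_simps)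
  then have "algebraic_int ?x"
    by (subst algebraic_int_altdef_ipoly) (intro exI[of _ "[:A\<^sup>2 - n * m\<^sup>2, -2 * A, 1:]"], simp)
  moreover have "?x = of_rat (of_int A) + of_rat (of_int m) * sqrt (real_of_int n)"
    by (simp add: of_rat_of_int_eq)
  ultimately show ?thesis
    unfolding real_ring_of_integers_def real_field_def by blast
qed

lemma real_quadratic_unit_iff_norm_dvd_one:
  fixes A m n :: int
  assumes "n \<ge> 0" and irr: "sqrt (real_of_int n) \<notin> \<rat>"
  shows "of_int A + of_int m * sqrt (real_of_int n) \<in> ring_units (real_ring_of_integers n)
           \<longleftrightarrow> A\<^sup>2 - n * m\<^sup>2 dvd 1"
    (is "?x \<in> _ \<longleftrightarrow> ?M dvd 1")
proof
  assume "?x \<in> ring_units (real_ring_of_integers n)"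
  then obtain y where "y \<in> real_ring_of_integers n" "?x * y = 1"
    by (auto simp: ring_units_def)
  then show "?M dvd 1"
    using assms by (intro quadratic_integer_unit_norm_dvd_one[where y = y])
      (simp_all add: real_ring_of_integers_def)
next
  assume "?M dvd 1"
  then have "?M * ?M = 1"
    by (metis abs_mult_self_eq mult_1 zdvd1_eq)
  let ?y = "of_int (?M * A) + of_int (- ?M * m) * sqrt (real_of_int n)"
  have "?x * ?y = of_int (?M * ?M)"
    using \<open>n \<ge> 0\<close> by (simp add: power2_eq_square algebra_simps)
  then show "?x \<in> ring_units (real_ring_of_integers n)"
    using \<open>?M * ?M = 1\<close> quadratic_integer_in_real_ring_of_integers[OF \<open>n \<ge> 0\<close>]
    unfolding ring_units_def by (metis (mono_tags, lifting) mem_Collect_eq of_int_1)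
qed

lemma sqrt_two_mult_odd_irrational:
  fixes d :: int
  assumes "d > 0" "odd d"
  shows "sqrt (real_of_int (2 * d)) \<notin> \<rat>"
proof
  assume "sqrt (real_of_int (2 * d)) \<in> \<rat>"
  then obtain k where k: "2 * d = k\<^sup>2"
    using sqrt_int_in_Rats_imp_square[of "2 * d"] assms(1) by auto
  then have "even k"
    by (metis dvd_triv_left even_power zero_less_numeral)
  then obtain j where "k = 2 * j" by blast
  with k have "d = 2 * j\<^sup>2"
    by (simp add: power2_eq_square)
  with assms(2) show False by simp
qed

definition qnorm :: "'a::comm_ring_1 quat \<Rightarrow> 'a" where
  "qnorm x = (qre x)\<^sup>2 + (qi x)\<^sup>2 + (qj x)\<^sup>2 + (qk x)\<^sup>2"

definition qconj :: "'a::comm_ring_1 quat \<Rightarrow> 'a quat" where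
  "qconj x = Quat (qre x) (- qi x) (- qj x) (- qk x)"

definition qcomps :: "'a quat \<Rightarrow> 'a set" where
  "qcomps x = {qre x, qi x, qj x, qk x}"

lemma quat_over_iff_qcomps: "x \<in> quat_over R \<longleftrightarrow> qcomps x \<subseteq> R"
  by (auto simp: quat_over_def qcomps_def)

lemma qmult_qconj_cancel_left: "qmult (qconj x) (qmult x y) = qscale (qnorm x) y"
  by (cases x; cases y)
    (simp add: qmult_def qconj_def qnorm_def qscale_def power2_eq_square algebra_simps)

lemma qmult_qone_right: "qmult x qone = x"
  by (cases x) (simp add: qmult_def qone_def)

lemma qconj_eq_qscale_qcomps:
  assumes "qconj x = qscale c y" "t \<in> qcomps x"
  shows "\<exists>w \<in> qcomps y. t = c * w \<or> - t = c * w"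
  using assms by (cases x; cases y) (auto simp: qconj_def qscale_def qcomps_def)

lemma quat_units_qnorm_dvd_qcomps:
  fixes u :: "'a::field_char_0 quat"
  assumes "u \<in> quat_units R" "\<forall>x\<in>R. algebraic_int x" "qnorm u = of_int N" "of_int k \<in> qcomps u"
  shows "N dvd k"
proof -
  obtain y where y: "y \<in> quat_over R" "qmult u y = qone"
    using assms(1) by (auto simp: quat_units_def)
  then have "qconj u = qscale (of_int N) y"
    using qmult_qconj_cancel_left[of u y] assms(3) by (simp add: qmult_qone_right)
  then obtain w where "w \<in> qcomps y" "of_int k = of_int N * w \<or> of_int (- k) = of_int N * w"
    using qconj_eq_qscale_qcomps assms(4) by fastforce
  moreover have "algebraic_int w"
    using \<open>w \<in> qcomps y\<close> y(1) assms(2) by (auto simp: quat_over_iff_qcomps)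
  ultimately show ?thesis
    by (metis dvd_minus_iff int_dvd_if_eq_mult_algebraic_int)
qed

lemma qmult_qscale_qconj:
  "qmult x (qscale c (qconj x)) = Quat (c * qnorm x) 0 0 0"
  "qmult (qscale c (qconj x)) x = Quat (c * qnorm x) 0 0 0"
  by (cases x; simp add: qmult_def qscale_def qconj_def qnorm_def power2_eq_square algebra_simps)+

lemma quat_units_if_qnorm_dvd_one:
  assumes "u \<in> quat_over R" "\<forall>x\<in>R. - x \<in> R" "qnorm u = of_int N" "N dvd 1"
  shows "u \<in> quat_units R"
proof -
  have "N = 1 \<or> N = -1"
    using assms(4) unfolding zdvd1_eq by linarith
  then have unit: "qnorm u = 1 \<or> qnorm u = -1"
    using assms(3) by auto
  define v where "v = qscale (qnorm u) (qconj u)"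
  have "qcomps v \<subseteq> qcomps u \<union> uminus ` qcomps u"
  proof (cases u)
    case (Quat x1 x2 x3 x4)
    with unit show ?thesis
      by (auto simp: v_def qscale_def qconj_def qcomps_def)
  qed
  then have "v \<in> quat_over R"
    using assms(1,2) by (auto simp: quat_over_iff_qcomps)
  moreover have "qnorm u * qnorm u = 1"
    using unit by auto
  then have "qmult u v = qone" "qmult v u = qone"
    by (simp_all add: v_def qmult_qscale_qconj qone_def)
  ultimately show ?thesis
    using assms(1) by (auto simp: quat_units_def)
qed

lemma qcomps_qnorm_three_basis_combination:
  fixes tA tB tC :: "'a::comm_ring_1" and a b c :: nat
  assumes "a \<in> {0..3}" "b \<in> {0..3}" "c \<in> {0..3}" "a \<noteq> b" "a \<noteq> c" "b \<noteq> c"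
  defines "u \<equiv> qadd (qadd (qscale tA (qbasis a)) (qscale tB (qbasis b))) (qscale tC (qbasis c))"
  shows "qcomps u = {0, tA, tB, tC}" "qnorm u = tA\<^sup>2 + tB\<^sup>2 + tC\<^sup>2"
proof -
  have "a \<in> {0, 1, 2, 3}" "b \<in> {0, 1, 2, 3}" "c \<in> {0, 1, 2, 3}"
    using assms(1-3) by auto
  then show "qcomps u = {0, tA, tB, tC}" "qnorm u = tA\<^sup>2 + tB\<^sup>2 + tC\<^sup>2"
    using assms(4-6)
    by (simp_all add: u_def qcomps_def qnorm_def qadd_def qscale_def qbasis_def;
        elim disjE; simp add: insert_commute add_ac)+
qed

lemma sqrt_neg_squared: "d > 0 \<Longrightarrow> (sqrt_neg d)\<^sup>2 = - of_int d"
  by (simp add: sqrt_neg_def power_mult_distrib flip: of_real_power)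

lemma of_int_in_imag_ring_of_integers: "of_int k \<in> imag_ring_of_integers d"
proof -
  have "of_int k = of_rat (of_int k) + of_rat 0 * sqrt_neg d"
    by (simp add: of_rat_of_int_eq)
  then show ?thesis
    unfolding imag_ring_of_integers_def imag_field_def by blast
qed

lemma of_int_mult_sqrt_neg_in_imag_ring_of_integers:
  assumes "d > 0"
  shows "of_int m * sqrt_neg d \<in> imag_ring_of_integers d"
proof -
  have "algebraic_int (of_int m * sqrt_neg d)"
  proof (rule algebraic_int_root[where p = "monom 1 2" and y = "of_int (- (m\<^sup>2 * d))"])
    show "poly (monom 1 2) (of_int m * sqrt_neg d) = of_int (- (m\<^sup>2 * d))"
      using sqrt_neg_squared[OF assms] by (simp add: poly_monom power_mult_distrib)
  qed (auto simp: degree_monom_eq simp del: of_int_minus of_int_mult of_int_power)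
  moreover have "of_int m * sqrt_neg d = of_rat 0 + of_rat (of_int m) * sqrt_neg d"
    by (simp add: of_rat_of_int_eq)
  ultimately show ?thesis
    unfolding imag_ring_of_integers_def imag_field_def by blast
qed

lemma uminus_in_imag_ring_of_integers:
  assumes "x \<in> imag_ring_of_integers d"
  shows "- x \<in> imag_ring_of_integers d"
proof -
  obtain a b where "x = of_rat a + of_rat b * sqrt_neg d" and "algebraic_int x"
    using assms unfolding imag_ring_of_integers_def imag_field_def by blast
  have "- x = of_rat (- a) + of_rat (- b) * sqrt_neg d"
    using \<open>x = _\<close> by (simp add: of_rat_minus)
  moreover have "algebraic_int (- x)"
    using \<open>algebraic_int x\<close> by simp
  ultimately show ?thesis
    unfolding imag_ring_of_integers_def imag_field_def by blast
qed

lemma imag_quat_unit_iff_norm_dvd_one: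
  fixes d p m :: int and a b c :: nat
  assumes "d > 0" "a \<in> {0..3}" "b \<in> {0..3}" "c \<in> {0..3}" "a \<noteq> b" "a \<noteq> c" "b \<noteq> c"
  shows "qadd (qadd (qscale (of_int m * sqrt_neg d) (qbasis a)) (qscale (of_int p) (qbasis b)))
              (qscale (of_int (1 - p)) (qbasis c))
           \<in> quat_units (imag_ring_of_integers d)
     \<longleftrightarrow> 2 * p\<^sup>2 - 2 * p + 1 - m\<^sup>2 * d dvd 1"
    (is "?u \<in> quat_units ?R \<longleftrightarrow> ?N dvd 1")
proof -
  note u = qcomps_qnorm_three_basis_combination[OF assms(2-7),
      of "of_int m * sqrt_neg d" "of_int p" "of_int (1 - p)"]
  have "(of_int m * sqrt_neg d)\<^sup>2 = of_int (- (m\<^sup>2 * d))"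
    using sqrt_neg_squared[OF assms(1)] by (simp add: power_mult_distrib)
  then have "qnorm ?u = of_int (- (m\<^sup>2 * d) + p\<^sup>2 + (1 - p)\<^sup>2)"
    unfolding u(2) by simp
  also have "- (m\<^sup>2 * d) + p\<^sup>2 + (1 - p)\<^sup>2 = ?N"
    by (simp add: power2_eq_square algebra_simps)
  finally have norm: "qnorm ?u = of_int ?N" .
  have over: "?u \<in> quat_over ?R"
    unfolding quat_over_iff_qcomps u(1)
    using of_int_in_imag_ring_of_integers[of _ d]
      of_int_mult_sqrt_neg_in_imag_ring_of_integers[OF assms(1)]
    by (auto simp del: of_int_diff intro: of_int_in_imag_ring_of_integers[of 0, simplified])
  have alg: "\<forall>x\<in>?R. algebraic_int x"
    by (simp add: imag_ring_of_integers_def)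
  show ?thesis
  proof (intro iffI)
    assume unit: "?u \<in> quat_units ?R"
    have "?N dvd p" "?N dvd 1 - p"
      by (rule quat_units_qnorm_dvd_qcomps[OF unit alg norm],
          simp add: u(1) del: of_int_diff)+
    then show "?N dvd 1"
      using dvd_add by fastforce
  next
    assume "?N dvd 1"
    then show "?u \<in> quat_units ?R"
      using uminus_in_imag_ring_of_integers
      by (intro quat_units_if_qnorm_dvd_one[OF over _ norm]) blast
  qed
qed

lemma norm_form_mod_four:
  fixes d p m :: int
  assumes "d mod 4 = 3"
  shows "(2 * p\<^sup>2 - 2 * p + 1 - m\<^sup>2 * d) mod 4 \<in> {1, 2}"
proof -
  define N where "N = 2 * p\<^sup>2 - 2 * p + 1 - m\<^sup>2 * d"
  have "even (p * (p - 1))" by simp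
  then obtain k where "p * (p - 1) = 2 * k" by blast
  then have k: "p\<^sup>2 - p = 2 * k"
    by (simp add: power2_eq_square algebra_simps)
  obtain e where d: "d = 4 * e + 3"
    using assms by (metis mod_div_mult_eq add.commute mult.commute)
  obtain j where "m = 2 * j \<or> m = 2 * j + 1"
    by (metis evenE oddE)
  then obtain q where "N = 4 * q + 1 \<or> N = 4 * q + 2"
  proof
    assume "m = 2 * j"
    then show thesis
      using k by (intro that[of "k - j\<^sup>2 * d"]) (simp add: N_def power2_eq_square algebra_simps)
  next
    assume "m = 2 * j + 1"
    then show thesis
      using k by (intro that[of "k - (j\<^sup>2 + j) * d - e - 1"])
        (simp add: N_def d power2_eq_square algebra_simps)
  qed
  then show ?thesis
    unfolding N_def[symmetric] by auto
qed

theorem mainTheorem16: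
  fixes d p m :: int and a b c :: nat
  assumes "d > 0" and "squarefree d" and "d mod 8 = 7"
    and "a \<in> {0..3}" and "b \<in> {0..3}" and "c \<in> {0..3}"
    and "a \<noteq> b" and "a \<noteq> c" and "b \<noteq> c"
  shows "qadd (qadd (qscale (of_int m * sqrt_neg d) (qbasis a)) (qscale (of_int p) (qbasis b)))
              (qscale (of_int (1 - p)) (qbasis c))
           \<in> quat_units (imag_ring_of_integers d)
     \<longleftrightarrow> (of_int (2 * p - 1) + of_int m * sqrt (real_of_int (2 * d)))
           \<in> ring_units (real_ring_of_integers (2 * d))"
proof -
  define N where "N = 2 * p\<^sup>2 - 2 * p + 1 - m\<^sup>2 * d"
  have "N mod 4 \<in> {1, 2}"
    unfolding N_def using assms(3) by (intro norm_form_mod_four) presburger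
  then have N_dvd_one_iff: "N dvd 1 \<longleftrightarrow> 2 * N - 1 dvd 1"
    by (auto simp: zdvd1_eq abs_if)
  have norm: "(2 * p - 1)\<^sup>2 - 2 * d * m\<^sup>2 = 2 * N - 1"
    by (simp add: N_def power2_eq_square algebra_simps)
  have irr: "sqrt (real_of_int (2 * d)) \<notin> \<rat>"
    using assms(1,3) by (intro sqrt_two_mult_odd_irrational) presburger+
  have "qadd (qadd (qscale (of_int m * sqrt_neg d) (qbasis a)) (qscale (of_int p) (qbasis b)))
          (qscale (of_int (1 - p)) (qbasis c)) \<in> quat_units (imag_ring_of_integers d)
        \<longleftrightarrow> N dvd 1"
    unfolding N_def by (rule imag_quat_unit_iff_norm_dvd_one[OF assms(1,4-9)])
  also have "\<dots> \<longleftrightarrow> (2 * p - 1)\<^sup>2 - 2 * d * m\<^sup>2 dvd 1"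
    unfolding norm by (rule N_dvd_one_iff)
  also have "\<dots> \<longleftrightarrow> (of_int (2 * p - 1) + of_int m * sqrt (real_of_int (2 * d)))
                       \<in> ring_units (real_ring_of_integers (2 * d))"
    using assms(1) irr by (intro real_quadratic_unit_iff_norm_dvd_one[symmetric]) simp_all
  finally show ?thesis .
qed

end
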